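(* Let $G$ be an arbitrary group and let $S$ be a subgroup of $G$. Then every complement $C$ of $S$ in $G$ (i.e. $SC=G$) contains a minimal complement of $S$ in $G$.
   Context: A nonempty set $W'\subseteq G$ is a complement to $W\subseteq G$ if $WW'=G$ (where $WW'=\{ww':w\in W,w'\in W'\}$); it is a minimal complement if no proper subset of $W'$ is a complement to $W$. *)

theory Defs
  imports "HOL-Algebra.Coset"
begin

definition is_complement :: "('a, 'b) monoid_scheme \<Rightarrow> 'a set \<Rightarrow> 'a set \<Rightarrow> bool" where
  "is_complement G W W' \<longleftrightarrow>
     W' \<noteq> {} \<and> W' \<subseteq> carrier G \<and> W <#>\<^bsub>G\<^esub> W' = carrier G"

definition is_minimal_complement :: "('a, 'b) monoid_scheme \<Rightarrow> 'a set \<Rightarrow> 'a set \<Rightarrow> bool" where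
  "is_minimal_complement G W W' \<longleftrightarrow>
     is_complement G W W' \<and> (\<forall>W''. W'' \<subset> W' \<longrightarrow> \<not> is_complement G W W'')"

end

theory Submission
  imports Defs
begin

text \<open>For a subgroup S, a set W is a complement of S exactly when it meets every right coset
  of S, and a complement meeting each right coset only once is minimal.
  A minimal complement inside a complement C is therefore obtained by choosing one element
  of C from each right coset of S.\<close>

lemma set_mult_eq_UN_r_coset: "H <#>\<^bsub>G\<^esub> K = (\<Union>k\<in>K. H #>\<^bsub>G\<^esub> k)"
  unfolding set_mult_def r_coset_def by auto

lemma (in group) set_mult_eq_carrier_iff_rcosets:
  assumes "subgroup S G" and "W \<subseteq> carrier G"
  shows "S <#> W = carrier G \<longleftrightarrow> (\<lambda>w. S #> w) ` W = rcosets S"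
proof
  assume covers: "S <#> W = carrier G"
  show "(\<lambda>w. S #> w) ` W = rcosets S"
  proof
    show "(\<lambda>w. S #> w) ` W \<subseteq> rcosets S"
      using assms(2) unfolding RCOSETS_def by blast
    show "rcosets S \<subseteq> (\<lambda>w. S #> w) ` W"
    proof
      fix X assume "X \<in> rcosets S"
      then obtain g where g: "g \<in> carrier G" "X = S #> g"
        unfolding RCOSETS_def by blast
      then obtain w where w: "w \<in> W" "g \<in> S #> w"
        using covers unfolding set_mult_eq_UN_r_coset by blast
      have "S #> g = S #> w"
        using repr_independence[OF w(2) _ assms(1)] w(1) assms(2) by blast
      with g w show "X \<in> (\<lambda>w. S #> w) ` W" by blast
    qed
  qed
next
  assume meets: "(\<lambda>w. S #> w) ` W = rcosets S"
  show "S <#> W = carrier G"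
  proof
    show "S <#> W \<subseteq> carrier G"
      using set_mult_closed[OF subgroup.subset[OF assms(1)] assms(2)] .
    show "carrier G \<subseteq> S <#> W"
    proof
      fix g assume g: "g \<in> carrier G"
      then have "S #> g \<in> (\<lambda>w. S #> w) ` W"
        unfolding meets RCOSETS_def by blast
      moreover have "g \<in> S #> g"
        using g assms(1) by (rule rcos_self)
      ultimately show "g \<in> S <#> W"
        unfolding set_mult_eq_UN_r_coset by blast
    qed
  qed
qed

lemma (in group) is_complement_subgroup_iff:
  assumes "subgroup S G"
  shows "is_complement G S W \<longleftrightarrow> W \<subseteq> carrier G \<and> (\<lambda>w. S #> w) ` W = rcosets S"
proof -
  have "rcosets S \<noteq> {}"
    using one_closed unfolding RCOSETS_def by blast
  then have "(\<lambda>w. S #> w) ` W = rcosets S \<Longrightarrow> W \<noteq> {}"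
    by auto
  with set_mult_eq_carrier_iff_rcosets[OF assms, of W] show ?thesis
    unfolding is_complement_def by auto
qed

lemma (in group) is_minimal_complement_if_inj_on_r_coset:
  assumes "subgroup S G" and "is_complement G S M" and "inj_on (\<lambda>w. S #> w) M"
  shows "is_minimal_complement G S M"
  unfolding is_minimal_complement_def
proof (intro conjI allI impI)
  fix W assume "W \<subset> M"
  then obtain m where m: "m \<in> M" "m \<notin> W" by blast
  show "\<not> is_complement G S W"
  proof
    assume "is_complement G S W"
    moreover have "S #> m \<in> rcosets S"
      using assms(2) m(1) unfolding is_complement_subgroup_iff[OF assms(1)] by blast
    ultimately obtain w where w: "w \<in> W" "S #> m = S #> w"
      unfolding is_complement_subgroup_iff[OF assms(1)] by blast
    with \<open>W \<subset> M\<close> have "m = w"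
      using inj_onD[OF assms(3)] m(1) by blast
    with m w show False by blast
  qed
qed fact

theorem proposition4p1:
  fixes G (structure)
  assumes "group G"
    and "subgroup S G"
    and "is_complement G S C"
  shows "\<exists>M. M \<subseteq> C \<and> is_minimal_complement G S M"
proof -
  interpret group G by fact
  have C: "C \<subseteq> carrier G" "rcosets S = (\<lambda>w. S #> w) ` C"
    using assms(3) unfolding is_complement_subgroup_iff[OF assms(2)] by auto
  then obtain M where M: "M \<subseteq> C" "inj_on (\<lambda>w. S #> w) M" "rcosets S = (\<lambda>w. S #> w) ` M"
    using subset_image_inj[of "rcosets S" "\<lambda>w. S #> w" C] by auto
  then have "is_complement G S M"
    using C(1) unfolding is_complement_subgroup_iff[OF assms(2)] by auto
  with M show ?thesis
    using is_minimal_complement_if_inj_on_r_coset[OF assms(2)] by blast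
qed

end
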